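(* Let $d\ge1$, let $\{e^j\}_{j=1}^d$ be the standard basis of $\mathbb{R}^d$, let $\|\cdot\|_2$ be the Euclidean norm, $B_2=\{x\in\mathbb{R}^d:\|x\|_2\le1\}$, and $B^o_2(x)=\{y:\|y-x\|_2<1\}$. Define $x^j:=\frac{1}{2d}e^j$ for $j=1,\dots,d$ and $x^{d+1}:=-\frac{1}{2d}\sum_{j=1}^d e^j$. Then $$B_2\subset\bigcup_{j=1}^{d+1}B^o_2(x^j).$$ *)

theory Defs
  imports "HOL-Analysis.Analysis"
begin

end

theory Submission
  imports Defs
begin

text \<open>Write \<open>c = 1/(2d)\<close> and \<open>s = \<parallel>x\<parallel>\<^sup>2 \<le> 1\<close>. If \<open>x\<close> lies in none of the balls around
  \<open>c e\<^sup>j\<close>, then \<open>s - 2c x\<^sub>j + c\<^sup>2 \<ge> 1\<close> bounds every coordinate from above by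
  \<open>u = (s + c\<^sup>2 - 1)/(2c) \<le> c/2\<close>. Since also \<open>x\<^sub>j \<ge> -1\<close>, each \<open>x\<^sub>j + x\<^sub>j\<^sup>2\<close> is at most
  \<open>5/4 max 0 u\<close>, and summing gives
  \<open>\<parallel>x + c(1,\<dots>,1)\<parallel>\<^sup>2 = s + 2c \<Sum> x\<^sub>j + d c\<^sup>2 \<le> (1 - 2c) s + 5c/8 + c/2 < 1\<close>.\<close>

lemma sum_axis_one: "(\<Sum>j\<in>UNIV. axis j 1) = (1 :: 'a::semiring_1 ^ 'n)"
  by (simp add: vec_eq_iff sum_component axis_def)

lemma inner_one_vec: "inner x (1 :: real ^ 'n) = (\<Sum>j\<in>UNIV. x $ j)"
  by (simp add: inner_vec_def)

lemma norm_vec_square: "(norm (x :: real ^ 'n))\<^sup>2 = (\<Sum>j\<in>UNIV. (x $ j)\<^sup>2)"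
  unfolding power2_norm_eq_inner by (simp add: inner_vec_def power2_eq_square)

lemma norm_one_vec_square: "(norm (1 :: real ^ 'n))\<^sup>2 = real CARD('n)"
  by (simp add: power2_norm_eq_inner inner_one_vec)

lemma norm_diff_square:
  fixes a b :: "'a::real_inner"
  shows "(norm (a - b))\<^sup>2 = (norm a)\<^sup>2 - 2 * inner a b + (norm b)\<^sup>2"
  by (simp add: power2_norm_eq_inner inner_diff inner_commute)

lemma component_le_if_outside_axis_ball:
  fixes x :: "real ^ 'n"
  assumes "c > 0" and "dist (c *\<^sub>R axis j 1) x \<ge> 1"
  shows "x $ j \<le> ((norm x)\<^sup>2 + c\<^sup>2 - 1) / (2 * c)"
proof -
  have "1 \<le> (dist (c *\<^sub>R axis j 1) x)\<^sup>2"
    using assms(2) by (simp add: one_le_power)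
  also have "\<dots> = c\<^sup>2 - 2 * c * x $ j + (norm x)\<^sup>2"
    by (simp add: dist_norm norm_diff_square inner_axis' power_mult_distrib)
  finally show ?thesis
    using assms(1) by (simp add: field_simps)
qed

lemma add_square_le_if_le:
  fixes t u :: real
  assumes "-1 \<le> t" and "t \<le> u" and "u \<le> 1/4"
  shows "t + t\<^sup>2 \<le> 5/4 * max 0 u"
proof (cases "t \<le> 0")
  case True
  then have "t * (1 + t) \<le> 0"
    using assms(1) by (intro mult_nonpos_nonneg) auto
  then show ?thesis
    by (simp add: power2_eq_square algebra_simps)
next
  case False
  then have "t * t \<le> u * (1/4)"
    using assms by (intro mult_mono) auto
  then show ?thesis
    using False assms(2) by (simp add: power2_eq_square)
qed

lemma dist_neg_diagonal_less_one_if_outside_axis_balls: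
  fixes x :: "real ^ 'n"
  assumes "norm x \<le> 1" and "2 * real CARD('n) * c = 1"
    and outside: "\<And>j. dist (c *\<^sub>R axis j 1) x \<ge> 1"
  shows "dist (- c *\<^sub>R 1) x < 1"
proof -
  define s where "s = (norm x)\<^sup>2"
  define u where "u = (s + c\<^sup>2 - 1) / (2 * c)"
  have c_eq: "c = 1 / (2 * real CARD('n))"
    using assms(2) by (simp add: field_simps)
  have c_pos: "c > 0"
    unfolding c_eq by simp
  have c_le: "c \<le> 1/2"
    unfolding c_eq by (simp add: frac_le)
  have s_le: "s \<le> 1"
    using assms(1) by (simp add: s_def power_le_one)
  have "u \<le> c\<^sup>2 / (2 * c)"
    using s_le c_pos by (simp add: u_def divide_right_mono)
  then have u_le: "u \<le> c / 2"
    using c_pos by (simp add: power2_eq_square)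
  have "x $ j + (x $ j)\<^sup>2 \<le> 5/4 * max 0 u" for j
  proof (rule add_square_le_if_le)
    show "-1 \<le> x $ j"
      using component_le_norm_cart[of x j] assms(1) by linarith
    show "x $ j \<le> u"
      unfolding u_def s_def by (rule component_le_if_outside_axis_ball[OF c_pos outside])
    show "u \<le> 1/4"
      using u_le c_le by simp
  qed
  then have "(\<Sum>j\<in>UNIV. x $ j) + s \<le> real CARD('n) * (5/4 * max 0 u)"
    using sum_mono[of UNIV "\<lambda>j. x $ j + (x $ j)\<^sup>2" "\<lambda>_. 5/4 * max 0 u"]
    by (simp add: s_def norm_vec_square sum.distrib)
  then have "2 * c * ((\<Sum>j\<in>UNIV. x $ j) + s) \<le> 2 * c * (real CARD('n) * (5/4 * max 0 u))"
    using c_pos by (intro mult_left_mono) auto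
  also have "\<dots> = (2 * real CARD('n) * c) * (5/4 * max 0 u)"
    by (simp add: algebra_simps)
  also have "\<dots> = 5/4 * max 0 u"
    using assms(2) by simp
  finally have "2 * c * ((\<Sum>j\<in>UNIV. x $ j) + s) \<le> 5/4 * max 0 u" .
  moreover have "(dist (- c *\<^sub>R 1) x)\<^sup>2 = real CARD('n) * c\<^sup>2 + 2 * c * (\<Sum>j\<in>UNIV. x $ j) + s"
    by (simp add: dist_norm norm_diff_square s_def norm_one_vec_square inner_one_vec
        power_mult_distrib inner_commute[of 1])
  moreover have "real CARD('n) * c\<^sup>2 = c / 2"
    using assms(2) by (simp add: power2_eq_square algebra_simps)
  moreover have "s * (1 - 2 * c) \<le> 1 - 2 * c"
    using mult_right_mono[OF s_le, of "1 - 2 * c"] c_le by simp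
  ultimately have "(dist (- c *\<^sub>R 1) x)\<^sup>2 < 1"
    using u_le c_pos by (simp add: algebra_simps)
  then show ?thesis
    by (simp add: abs_square_less_1)
qed

theorem proposition3p1:
  fixes d :: nat
  assumes "d = CARD('n::finite)"
  shows "cball (0::real^'n) 1 \<subseteq>
           (\<Union>j\<in>(UNIV::'n set). ball ((1 / (2 * real d)) *\<^sub>R axis j 1) 1)
           \<union> ball (- (1 / (2 * real d)) *\<^sub>R (\<Sum>j\<in>UNIV. axis j 1)) 1"
proof
  fix x :: "real ^ 'n"
  assume "x \<in> cball 0 1"
  then have "norm x \<le> 1"
    by simp
  moreover have "2 * real CARD('n) * (1 / (2 * real d)) = 1"
    using assms by simp
  ultimately show "x \<in> (\<Union>j. ball ((1 / (2 * real d)) *\<^sub>R axis j 1) 1)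
      \<union> ball (- (1 / (2 * real d)) *\<^sub>R (\<Sum>j\<in>UNIV. axis j 1)) 1"
    using dist_neg_diagonal_less_one_if_outside_axis_balls[of x "1 / (2 * real d)"]
    by (force simp: sum_axis_one not_less)
qed

end
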